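(* Let $0<\varepsilon\le 1$, let $A>0$, and let $x_1,\dots,x_k>0$ be item sizes with $\sum_{i=1}^k x_i\le A$ and $k\ge\lceil 1/\varepsilon^2\rceil$. Let $A'$ be the largest number of the form $(1+\varepsilon)^z$, $z\in\mathbb{Z}$, with $A'\le A$. Remove items one at a time in order of non-increasing size (largest first) until the total size of the remaining items is at most $A'$. Then at least $(1-2\varepsilon)k$ items remain. *)

theory Defs
  imports Complex_Main
begin

end

theory Submission
  imports Defs
begin

text \<open>
  Let \<open>m = r - 1\<close>. Since the tail from position \<open>m\<close> still exceeds \<open>A'\<close>, the
  \<open>m\<close> largest items weigh less than \<open>S - A'\<close>, where \<open>S \<le> A < (1 + \<epsilon>) A'\<close> is
  the total size; hence they weigh less than \<open>\<epsilon> S\<close>. Being the largest, they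
  weigh at least \<open>m S / k\<close>, so \<open>m < \<epsilon> k\<close>. Finally \<open>k \<ge> 1/\<epsilon>\<^sup>2 \<ge> 1/\<epsilon>\<close> gives
  \<open>r = m + 1 \<le> 2 \<epsilon> k\<close>.
\<close>

lemma sum_prefix_of_antimono_ge:
  fixes y :: "nat \<Rightarrow> 'a :: linordered_idom"
  assumes antimono: "\<And>i j. i \<le> j \<Longrightarrow> j < k \<Longrightarrow> y j \<le> y i" and "m \<le> k"
  shows "of_nat m * (\<Sum>i<k. y i) \<le> of_nat k * (\<Sum>i<m. y i)"
proof (cases "m = 0")
  case True
  then show ?thesis by simp
next
  case False
  define c where "c = y (m - 1)"
  have prefix: "of_nat m * c \<le> (\<Sum>i<m. y i)"
    using sum_mono[of "{..<m}" "\<lambda>_. c" y] antimono \<open>m \<le> k\<close> False by (auto simp: c_def)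
  have "(\<Sum>i\<in>{m..<k}. y i) \<le> (\<Sum>i\<in>{m..<k}. c)"
    by (rule sum_mono) (use antimono False in \<open>auto simp: c_def\<close>)
  then have tail: "(\<Sum>i\<in>{m..<k}. y i) \<le> of_nat (k - m) * c"
    by simp
  have split: "(\<Sum>i<k. y i) = (\<Sum>i<m. y i) + (\<Sum>i\<in>{m..<k}. y i)"
    using \<open>m \<le> k\<close> by (metis atLeast0LessThan sum.atLeastLessThan_concat zero_le)
  have "of_nat m * (\<Sum>i\<in>{m..<k}. y i) \<le> of_nat (k - m) * (of_nat m * c)"
    using mult_left_mono[OF tail, of "of_nat m"] by (simp add: mult_ac)
  also have "\<dots> \<le> of_nat (k - m) * (\<Sum>i<m. y i)"
    using prefix by (simp add: mult_left_mono)
  finally show ?thesis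
    unfolding split using \<open>m \<le> k\<close> by (simp add: algebra_simps of_nat_diff)
qed

lemma less_mult_of_maximal_power_int:
  fixes b A A' :: real
  assumes "1 < b" and "A' = b powi z"
    and maximal: "\<And>z::int. b powi z \<le> A \<Longrightarrow> b powi z \<le> A'"
  shows "A < b * A'"
proof (rule ccontr)
  assume "\<not> A < b * A'"
  then have "b powi (z + 1) \<le> A"
    using assms(1,2) by (simp add: power_int_add mult.commute)
  then have "b powi (z + 1) \<le> A'" by (rule maximal)
  then have "b * A' \<le> A'"
    using assms(1,2) by (simp add: power_int_add mult.commute)
  moreover have "0 < A'" using assms(1,2) by simp
  ultimately show False using \<open>1 < b\<close> by simp
qed

lemma sum_prefix_lt_if_tail_gt:
  fixes y :: "nat \<Rightarrow> real"
  assumes nonneg: "\<And>i. i < k \<Longrightarrow> 0 \<le> y i" and "m \<le> k" and "0 < \<epsilon>"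
    and tail: "A' < (\<Sum>i\<in>{m..<k}. y i)"
    and total: "(\<Sum>i<k. y i) < (1 + \<epsilon>) * A'"
  shows "(\<Sum>i<m. y i) < \<epsilon> * (\<Sum>i<k. y i)"
proof -
  have split: "(\<Sum>i<k. y i) = (\<Sum>i<m. y i) + (\<Sum>i\<in>{m..<k}. y i)"
    using \<open>m \<le> k\<close> by (metis atLeast0LessThan sum.atLeastLessThan_concat zero_le)
  have "0 \<le> (\<Sum>i<m. y i)"
    using nonneg \<open>m \<le> k\<close> by (intro sum_nonneg) auto
  then have "(\<Sum>i<m. y i) \<le> (1 + \<epsilon>) * (\<Sum>i<m. y i)"
    using \<open>0 < \<epsilon>\<close> by (simp add: distrib_right)
  also have "\<dots> < (1 + \<epsilon>) * ((\<Sum>i<k. y i) - A')"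
    using split tail \<open>0 < \<epsilon>\<close> by simp
  also have "\<dots> < \<epsilon> * (\<Sum>i<k. y i)"
    using total by (simp add: algebra_simps)
  finally show ?thesis .
qed

lemma one_le_of_nat_mult_if_ge_inverse_square:
  fixes \<epsilon> :: real
  assumes "0 < \<epsilon>" "\<epsilon> \<le> 1" and "k \<ge> nat \<lceil>1 / \<epsilon>\<^sup>2\<rceil>"
  shows "1 \<le> real k * \<epsilon>"
proof -
  have "1 / \<epsilon> \<le> 1 / \<epsilon>\<^sup>2"
    using assms(1,2) by (simp add: divide_simps power2_eq_square mult_le_cancel_left1)
  also have "\<dots> \<le> real k" using assms(3) by linarith
  finally show ?thesis using assms(1) by (simp add: divide_simps)
qed

theorem lemma5:
  fixes \<epsilon> A A' :: real and x :: "nat \<Rightarrow> real" and k r :: nat and \<sigma> :: "nat \<Rightarrow> nat"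
  assumes eps: "0 < \<epsilon>" "\<epsilon> \<le> 1"
    and Apos: "0 < A"
    and xpos: "\<And>i. i < k \<Longrightarrow> 0 < x i"
    and sumA: "(\<Sum>i<k. x i) \<le> A"
    and kbig: "k \<ge> nat \<lceil>1 / \<epsilon>\<^sup>2\<rceil>"
    and A'_pow: "\<exists>z::int. A' = (1 + \<epsilon>) powi z"
    and A'_le: "A' \<le> A"
    and A'_max: "\<And>z::int. (1 + \<epsilon>) powi z \<le> A \<Longrightarrow> (1 + \<epsilon>) powi z \<le> A'"
    and \<sigma>_bij: "bij_betw \<sigma> {..<k} {..<k}"
    and \<sigma>_sorted: "\<And>i j. i \<le> j \<Longrightarrow> j < k \<Longrightarrow> x (\<sigma> j) \<le> x (\<sigma> i)"
    and r_le: "r \<le> k"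
    and r_stop: "(\<Sum>i\<in>{r..<k}. x (\<sigma> i)) \<le> A'"
    and r_first: "\<And>r'. r' < r \<Longrightarrow> (\<Sum>i\<in>{r'..<k}. x (\<sigma> i)) > A'"
  shows "real k - real r \<ge> (1 - 2 * \<epsilon>) * real k"
proof (cases "r = 0")
  case True
  have "0 \<le> 2 * \<epsilon> * real k" using eps by simp
  then show ?thesis using True by (simp add: algebra_simps)
next
  case False
  define m where "m = r - 1"
  define y where "y i = x (\<sigma> i)" for i
  have "m \<le> k" "0 < k" using r_le False by (auto simp: m_def)
  have ypos: "\<And>i. i < k \<Longrightarrow> 0 < y i"
    using \<sigma>_bij xpos by (auto simp: y_def bij_betw_def)
  have total: "(\<Sum>i<k. y i) = (\<Sum>i<k. x i)"
    unfolding y_def using sum.reindex_bij_betw[OF \<sigma>_bij, of x] by simp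
  obtain z where "A' = (1 + \<epsilon>) powi z" using A'_pow by blast
  then have "A < (1 + \<epsilon>) * A'"
    using eps A'_max by (intro less_mult_of_maximal_power_int) auto
  then have removed: "(\<Sum>i<m. y i) < \<epsilon> * (\<Sum>i<k. y i)"
    using ypos r_first[of m] False sumA total \<open>m \<le> k\<close> eps
    by (intro sum_prefix_lt_if_tail_gt) (auto simp: m_def y_def less_imp_le)
  have "real m * (\<Sum>i<k. y i) \<le> real k * (\<Sum>i<m. y i)"
    using sum_prefix_of_antimono_ge[of k y m] \<sigma>_sorted \<open>m \<le> k\<close> by (simp add: y_def)
  also have "\<dots> < real k * \<epsilon> * (\<Sum>i<k. y i)"
    using removed \<open>0 < k\<close> by simp
  finally have "real m * (\<Sum>i<k. y i) < real k * \<epsilon> * (\<Sum>i<k. y i)" .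
  moreover have "0 < (\<Sum>i<k. y i)"
    using ypos \<open>0 < k\<close> by (intro sum_pos) auto
  ultimately have "real m < real k * \<epsilon>"
    by simp
  moreover have "1 \<le> real k * \<epsilon>"
    using eps kbig by (rule one_le_of_nat_mult_if_ge_inverse_square)
  ultimately show ?thesis using False by (simp add: m_def algebra_simps of_nat_diff)
qed

end
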